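(* Let $I=(f_1,\ldots,f_r)\subset\mathbb{C}[x_1,\ldots,x_n]$ be an ideal generated by quasi-homogeneous polynomials (with respect to a common system of positive weights on $x_1,\ldots,x_n$), and let \[f_I(x_1,\ldots,x_n,y_1,\ldots,y_r)=\sum_{i=1}^r y_i f_i(x_1,\ldots,x_n).\] Then $f_I$ is a quasi-homogeneous polynomial (for suitable positive weights on the $y_i$), and its global Milnor fibre $f_I^{-1}(1)\subset\mathbb{C}^{n+r}$ is homotopy equivalent to $\mathbb{C}^n\setminus V(I)$, where $V(I)$ is the zero set of $I$.
   Context: A polynomial $g$ is quasi-homogeneous with respect to positive weights $w_1,\ldots,w_N$ if $g(t^{w_1}z_1,\ldots,t^{w_N}z_N)=t^d g(z)$ for some $d$; an ideal is quasi-homogeneous if generated by such polynomials for common weights. The global Milnor fibre of a quasi-homogeneous polynomial $g$ is $g^{-1}(1)$. *)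

theory Defs
  imports "HOL-Analysis.Analysis"
begin

definition poly_fun :: "(complex^'v::finite \<Rightarrow> complex) \<Rightarrow> bool" where
  "poly_fun g \<longleftrightarrow> (\<exists>M :: ('v \<Rightarrow> nat) set. \<exists>c. finite M \<and>
      (\<forall>z. g z = (\<Sum>m\<in>M. c m * (\<Prod>v\<in>UNIV. (z$v) ^ m v))))"

definition quasi_hom :: "('v::finite \<Rightarrow> nat) \<Rightarrow> nat \<Rightarrow> (complex^'v \<Rightarrow> complex) \<Rightarrow> bool" where
  "quasi_hom w d g \<longleftrightarrow> (\<forall>t::complex. \<forall>z. g (\<chi> v. t ^ w v * z$v) = t ^ d * g z)"

definition pos_weights :: "('v \<Rightarrow> nat) \<Rightarrow> bool" where
  "pos_weights w \<longleftrightarrow> (\<forall>v. w v > 0)"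

text \<open>The polynomial f_I(x,y) = sum_i y_i f_i(x) on C^(n+r); x-variables are Inl, y-variables Inr.\<close>
definition fI :: "('r::finite \<Rightarrow> complex^'n::finite \<Rightarrow> complex) \<Rightarrow> complex^('n + 'r) \<Rightarrow> complex" where
  "fI f z = (\<Sum>i\<in>UNIV. z$(Inr i) * f i (\<chi> v. z$(Inl v)))"

definition zero_set :: "('r \<Rightarrow> complex^'n::finite \<Rightarrow> complex) \<Rightarrow> (complex^'n) set" where
  "zero_set f = {x. \<forall>i. f i x = 0}"

definition join_weights :: "('n \<Rightarrow> nat) \<Rightarrow> ('r \<Rightarrow> nat) \<Rightarrow> ('n + 'r) \<Rightarrow> nat" where
  "join_weights wx wy = case_sum wx wy"

end

theory Submission
  imports Defs
begin

text \<open>Over a point x outside V(I) the fibre of f_I is the affine subspace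
  {y. \<Sum>i y_i f_i(x) = 1}, which is nonempty and convex. Hence the projection
  (x, y) \<mapsto> x is a homotopy equivalence onto C^n - V(I); a homotopy inverse is the
  section choosing y_i = conj (f_i x) / \<Sum>j |f_j x|^2, and both homotopies are
  straight-line homotopies. Quasi-homogeneity holds with any y-weights
  e - d_i where e exceeds every degree d_i.\<close>

lemma poly_fun_sum_monomials:
  fixes g :: "complex^'v::finite \<Rightarrow> complex" and A :: "'a set"
  assumes "finite A" "\<And>z. g z = (\<Sum>k\<in>A. c k * (\<Prod>v\<in>UNIV. (z$v) ^ m k v))"
  shows "poly_fun g"
proof -
  define c' where "c' \<mu> = (\<Sum>k\<in>{k\<in>A. m k = \<mu>}. c k)" for \<mu>
  have "g z = (\<Sum>\<mu>\<in>m ` A. c' \<mu> * (\<Prod>v\<in>UNIV. (z$v) ^ \<mu> v))" for z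
  proof -
    have "g z = (\<Sum>\<mu>\<in>m ` A. \<Sum>k\<in>{k\<in>A. m k = \<mu>}. c k * (\<Prod>v\<in>UNIV. (z$v) ^ m k v))"
      using assms sum.image_gen[OF assms(1), of "\<lambda>k. c k * (\<Prod>v\<in>UNIV. (z$v) ^ m k v)" m]
      by simp
    also have "\<dots> = (\<Sum>\<mu>\<in>m ` A. c' \<mu> * (\<Prod>v\<in>UNIV. (z$v) ^ \<mu> v))"
      unfolding c'_def sum_distrib_right by (intro sum.cong refl) auto
    finally show ?thesis .
  qed
  then show ?thesis
    unfolding poly_fun_def using assms(1) by blast
qed

lemma continuous_on_poly_fun:
  fixes g :: "complex^'v::finite \<Rightarrow> complex"
  assumes "poly_fun g"
  shows "continuous_on S g"
proof -
  obtain M c where "\<forall>z. g z = (\<Sum>\<mu>\<in>M. c \<mu> * (\<Prod>v\<in>UNIV. (z$v) ^ \<mu> v))"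
    using assms unfolding poly_fun_def by blast
  then have "g = (\<lambda>z. \<Sum>\<mu>\<in>M. c \<mu> * (\<Prod>v\<in>UNIV. (z$v) ^ \<mu> v))"
    by auto
  then show ?thesis
    by (simp add: continuous_intros)
qed

definition proj_x :: "complex^('n::finite + 'r::finite) \<Rightarrow> complex^'n" where
  "proj_x z = (\<chi> v. z$Inl v)"

lemma fI_eq_sum_proj_x: "fI f z = (\<Sum>i\<in>UNIV. z$Inr i * f i (proj_x z))"
  unfolding fI_def proj_x_def ..

lemma continuous_on_proj_x: "continuous_on S proj_x"
  unfolding proj_x_def by (intro continuous_intros)

definition lift_monomial :: "'r \<Rightarrow> ('n \<Rightarrow> nat) \<Rightarrow> 'n + 'r \<Rightarrow> nat" where
  "lift_monomial i \<mu> = case_sum \<mu> (\<lambda>j. if j = i then 1 else 0)"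

lemma prod_power_lift_monomial:
  fixes z :: "complex^('n::finite + 'r::finite)"
  shows "(\<Prod>u\<in>UNIV. (z$u) ^ lift_monomial i \<mu> u) = z$Inr i * (\<Prod>v\<in>UNIV. (z$Inl v) ^ \<mu> v)"
proof -
  have "(\<Prod>u\<in>UNIV. (z$u) ^ lift_monomial i \<mu> u)
      = (\<Prod>u\<in>range Inl. (z$u) ^ lift_monomial i \<mu> u) * (\<Prod>u\<in>range Inr. (z$u) ^ lift_monomial i \<mu> u)"
    by (subst UNIV_sum, rule prod.union_disjoint) auto
  also have "(\<Prod>u\<in>range Inl. (z$u) ^ lift_monomial i \<mu> u) = (\<Prod>v\<in>UNIV. (z$Inl v) ^ \<mu> v)"
    by (subst prod.reindex) (auto simp: lift_monomial_def)
  also have "(\<Prod>u\<in>range Inr. (z$u) ^ lift_monomial i \<mu> u) = (\<Prod>j\<in>UNIV. (z$Inr j) ^ lift_monomial i \<mu> (Inr j))"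
    by (subst prod.reindex) auto
  also have "\<dots> = (\<Prod>j\<in>UNIV. if j = i then z$Inr i else 1)"
    by (intro prod.cong) (auto simp: lift_monomial_def)
  also have "\<dots> = z$Inr i"
    by (simp add: prod.delta)
  finally show ?thesis
    by simp
qed

lemma poly_fun_fI:
  fixes f :: "'r::finite \<Rightarrow> complex^'n::finite \<Rightarrow> complex"
  assumes "\<And>i. poly_fun (f i)"
  shows "poly_fun (fI f)"
proof -
  have "\<forall>i. \<exists>M c. finite M \<and> (\<forall>x. f i x = (\<Sum>\<mu>\<in>M. c \<mu> * (\<Prod>v\<in>UNIV. (x$v) ^ \<mu> v)))"
    using assms unfolding poly_fun_def by blast
  then obtain M c where M: "\<And>i. finite (M i)"
    and f_eq: "\<And>i x. f i x = (\<Sum>\<mu>\<in>M i. c i \<mu> * (\<Prod>v\<in>UNIV. (x$v) ^ \<mu> v))"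
    by metis
  have "fI f z = (\<Sum>p\<in>(SIGMA i:UNIV. M i).
                    c (fst p) (snd p) * (\<Prod>u\<in>UNIV. (z$u) ^ lift_monomial (fst p) (snd p) u))" for z
  proof -
    have "fI f z = (\<Sum>i\<in>UNIV. \<Sum>\<mu>\<in>M i. c i \<mu> * (\<Prod>u\<in>UNIV. (z$u) ^ lift_monomial i \<mu> u))"
      unfolding fI_def f_eq prod_power_lift_monomial
      by (simp add: sum_distrib_left mult_ac)
    then show ?thesis
      by (subst (asm) sum.Sigma) (auto simp: M case_prod_beta)
  qed
  then show ?thesis
    by (rule poly_fun_sum_monomials[rotated]) (simp add: M)
qed

lemma quasi_hom_fI:
  fixes f :: "'r::finite \<Rightarrow> complex^'n::finite \<Rightarrow> complex"
  assumes hom: "\<And>i. quasi_hom w (d i) (f i)"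
    and deg: "\<And>i. wy i + d i = e"
  shows "quasi_hom (join_weights w wy) e (fI f)"
  unfolding quasi_hom_def
proof (intro allI)
  fix t :: complex and z :: "complex^('n+'r)"
  have f_scaled: "f i (\<chi> v. t ^ w v * z$Inl v) = t ^ d i * f i (proj_x z)" for i
  proof -
    have "(\<chi> v. t ^ w v * z$Inl v) = (\<chi> v. t ^ w v * proj_x z $ v)"
      by (simp add: proj_x_def)
    then show ?thesis
      using hom[of i] unfolding quasi_hom_def by simp
  qed
  have "fI f (\<chi> u. t ^ join_weights w wy u * z$u)
      = (\<Sum>i\<in>UNIV. (t ^ wy i * z$Inr i) * (t ^ d i * f i (proj_x z)))"
    unfolding fI_def join_weights_def by (simp add: f_scaled)
  also have "\<dots> = (\<Sum>i\<in>UNIV. t ^ (wy i + d i) * (z$Inr i * f i (proj_x z)))"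
    by (simp add: power_add mult_ac)
  also have "\<dots> = t ^ e * fI f z"
    by (simp add: deg fI_eq_sum_proj_x sum_distrib_left)
  finally show "fI f (\<chi> u. t ^ join_weights w wy u * z$u) = t ^ e * fI f z" .
qed

lemma quasi_hom_fI_exists_weights:
  fixes f :: "'r::finite \<Rightarrow> complex^'n::finite \<Rightarrow> complex"
  assumes "\<And>i. quasi_hom w (d i) (f i)"
  shows "\<exists>wy e. pos_weights wy \<and> quasi_hom (join_weights w wy) e (fI f)"
proof -
  define e where "e = Suc (Max (range d))"
  have d_less: "d i < e" for i
    unfolding e_def by (simp add: le_imp_less_Suc)
  then have "pos_weights (\<lambda>i. e - d i)"
    unfolding pos_weights_def by simp
  moreover have "quasi_hom (join_weights w (\<lambda>i. e - d i)) e (fI f)"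
    by (rule quasi_hom_fI[OF assms]) (simp add: d_less less_imp_le)
  ultimately show ?thesis
    by blast
qed

definition fibre_section :: "('r::finite \<Rightarrow> complex^'n::finite \<Rightarrow> complex) \<Rightarrow> complex^'n \<Rightarrow> complex^('n + 'r)" where
  "fibre_section f x =
     (\<chi> u. case u of Inl v \<Rightarrow> x$v
                   | Inr i \<Rightarrow> cnj (f i x) / of_real (\<Sum>j\<in>UNIV. (cmod (f j x))\<^sup>2))"

lemma proj_x_fibre_section [simp]: "proj_x (fibre_section f x) = x"
  unfolding proj_x_def fibre_section_def by (simp add: vec_eq_iff)

lemma sum_norm_square_neq_0:
  fixes f :: "'r::finite \<Rightarrow> complex^'n::finite \<Rightarrow> complex"
  assumes "x \<notin> zero_set f"
  shows "(\<Sum>j\<in>UNIV. (cmod (f j x))\<^sup>2) \<noteq> 0"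
proof
  assume "(\<Sum>j\<in>UNIV. (cmod (f j x))\<^sup>2) = 0"
  then have "\<forall>j. f j x = 0"
    by (subst (asm) sum_nonneg_eq_0_iff) auto
  then show False
    using assms unfolding zero_set_def by simp
qed

lemma fI_fibre_section:
  assumes "x \<notin> zero_set f"
  shows "fI f (fibre_section f x) = 1"
proof -
  define N where "N = (\<Sum>j\<in>UNIV. (cmod (f j x))\<^sup>2)"
  have "N \<noteq> 0"
    unfolding N_def using assms by (rule sum_norm_square_neq_0)
  have "fI f (fibre_section f x) = (\<Sum>i\<in>UNIV. cnj (f i x) / of_real N * f i x)"
    unfolding fI_eq_sum_proj_x proj_x_fibre_section by (simp add: fibre_section_def N_def)
  also have "\<dots> = of_real N / of_real N"
    unfolding N_def of_real_sum complex_norm_square sum_divide_distrib by (simp add: mult_ac)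
  also have "\<dots> = 1"
    using \<open>N \<noteq> 0\<close> by simp
  finally show ?thesis .
qed

lemma proj_x_fibre_notin_zero_set:
  assumes "fI f z = 1"
  shows "proj_x z \<notin> zero_set f"
proof
  assume "proj_x z \<in> zero_set f"
  then have "fI f z = 0"
    unfolding fI_eq_sum_proj_x zero_set_def by simp
  with assms show False
    by simp
qed

lemma continuous_on_fibre_section:
  fixes f :: "'r::finite \<Rightarrow> complex^'n::finite \<Rightarrow> complex"
  assumes "\<And>i. continuous_on (UNIV - zero_set f) (f i)"
  shows "continuous_on (UNIV - zero_set f) (fibre_section f)"
  unfolding fibre_section_def
proof (intro continuous_on_vec_lambda)
  fix u :: "'n+'r"
  show "continuous_on (UNIV - zero_set f)
          (\<lambda>x. case u of Inl v \<Rightarrow> x$v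
                      | Inr i \<Rightarrow> cnj (f i x) / of_real (\<Sum>j\<in>UNIV. (cmod (f j x))\<^sup>2))"
    using sum_norm_square_neq_0[of _ f]
    by (cases u) (auto intro!: continuous_intros assms simp del: of_real_sum of_real_power)
qed

text \<open>f_I is affine along segments in the y-directions, which is what makes the
  fibres over C^n convex.\<close>
lemma fI_segment_same_proj_x:
  assumes "proj_x a = proj_x b"
  shows "fI f ((1 - u) *\<^sub>R a + u *\<^sub>R b) = (1 - of_real u) * fI f a + of_real u * fI f b"
proof -
  have "proj_x ((1 - u) *\<^sub>R a + u *\<^sub>R b) = proj_x a"
    using assms unfolding proj_x_def vec_eq_iff by (simp add: algebra_simps)
  then have "fI f ((1 - u) *\<^sub>R a + u *\<^sub>R b)
      = (\<Sum>i\<in>UNIV. ((1 - u) *\<^sub>R a$Inr i + u *\<^sub>R b$Inr i) * f i (proj_x a))"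
    unfolding fI_eq_sum_proj_x by simp
  also have "\<dots> = (1 - of_real u) * fI f a + of_real u * fI f b"
    unfolding fI_eq_sum_proj_x assms
    by (simp add: scaleR_conv_of_real algebra_simps sum.distrib sum_distrib_left sum_subtractf)
  finally show ?thesis .
qed

lemma fI_fibre_homotopy_eqv:
  assumes "\<And>i. continuous_on UNIV (f i)"
  shows "(fI f -` {1}) homotopy_eqv (UNIV - zero_set f)"
proof -
  define S where "S = fI f -` {1}"
  define T where "T = UNIV - zero_set f"
  define s where "s = fibre_section f"
  have proj_S: "proj_x \<in> S \<rightarrow> T"
    unfolding S_def T_def using proj_x_fibre_notin_zero_set by blast
  have s_T: "s \<in> T \<rightarrow> S"
    unfolding S_def T_def s_def using fI_fibre_section by blast
  have cont_s: "continuous_on T s"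
    unfolding T_def s_def
    by (intro continuous_on_fibre_section continuous_on_subset[OF assms]) simp
  have "homotopic_with_canon (\<lambda>x. True) S S (s \<circ> proj_x) id"
  proof (rule homotopic_with_linear)
    show "continuous_on S (s \<circ> proj_x)"
      using proj_S by (intro continuous_on_compose continuous_on_proj_x continuous_on_subset[OF cont_s]) auto
    show "closed_segment ((s \<circ> proj_x) z) (id z) \<subseteq> S" if z: "z \<in> S" for z
    proof
      fix y assume "y \<in> closed_segment ((s \<circ> proj_x) z) (id z)"
      then obtain u where y: "y = (1 - u) *\<^sub>R s (proj_x z) + u *\<^sub>R z"
        by (auto simp: in_segment)
      have "fI f (s (proj_x z)) = 1" "fI f z = 1"
        using s_T proj_S z unfolding S_def by auto
      then have "fI f y = 1"
        unfolding y by (subst fI_segment_same_proj_x) (auto simp: s_def algebra_simps)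
      then show "y \<in> S"
        unfolding S_def by simp
    qed
  qed (simp add: continuous_on_id)
  moreover have "homotopic_with_canon (\<lambda>x. True) T T (proj_x \<circ> s) id"
    by (rule homotopic_with_linear) (auto simp: s_def intro: continuous_on_compose cont_s continuous_on_proj_x)
  ultimately show ?thesis
    unfolding S_def[symmetric] T_def[symmetric] homotopy_equivalent_space_def
    using proj_S s_T cont_s continuous_on_proj_x by (intro exI[of _ proj_x] exI[of _ s]) auto
qed

theorem mainTheorem2:
  fixes f :: "'r::finite \<Rightarrow> complex^'n::finite \<Rightarrow> complex"
    and w :: "'n \<Rightarrow> nat" and d :: "'r \<Rightarrow> nat"
  assumes "\<And>i. poly_fun (f i)"
    and "pos_weights w"
    and "\<And>i. quasi_hom w (d i) (f i)"
  shows "poly_fun (fI f)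
    \<and> (\<exists>wy :: 'r \<Rightarrow> nat. \<exists>e. pos_weights wy \<and> quasi_hom (join_weights w wy) e (fI f))
    \<and> ((fI f) -` {1}) homotopy_eqv (UNIV - zero_set f)"
  by (intro conjI poly_fun_fI quasi_hom_fI_exists_weights[OF assms(3)] fI_fibre_homotopy_eqv
        continuous_on_poly_fun assms(1))

end
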